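(* There is $n_0$ such that for every $n>n_0$ and every $H\in\{P_4, 2K_2\}$, $$\mathrm{IR}(H, K_{1,n}) \leq n + 2n\log^{-1/4} n.$$
   Context: All graphs are finite and simple. $P_4$ is the path on $4$ vertices, $2K_2$ is the disjoint union of two edges, $K_{1,n}$ is the star with $n$ edges. For graphs $F$, $H$, $G$, write $F \overset{\text{ind}}{\longrightarrow} (H,G)$ if for every coloring of the edges of $F$ with red and blue there is either a red induced copy of $H$ (a vertex set $S\subseteq V(F)$ with $F[S]\cong H$ and all edges of $F[S]$ red) or a blue induced copy of $G$ (defined analogously with blue). The induced Ramsey number $\mathrm{IR}(H,G)$ is the smallest number of vertices of a graph $F$ with $F \overset{\text{ind}}{\longrightarrow} (H,G)$. *)

theory Defs
  imports Complex_Main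
begin

type_synonym 'a graph = "'a set \<times> 'a set set"

definition verts :: "'a graph \<Rightarrow> 'a set" where "verts G = fst G"
definition edges :: "'a graph \<Rightarrow> 'a set set" where "edges G = snd G"

definition simple_graph :: "'a graph \<Rightarrow> bool" where
  "simple_graph G \<longleftrightarrow> finite (verts G) \<and>
     (\<forall>e\<in>edges G. \<exists>u v. e = {u, v} \<and> u \<noteq> v \<and> u \<in> verts G \<and> v \<in> verts G)"

definition P4 :: "nat graph" where
  "P4 = ({0,1,2,3}, {{0,1},{1,2},{2,3}})"

definition twoK2 :: "nat graph" where
  "twoK2 = ({0,1,2,3}, {{0,1},{2,3}})"

definition star :: "nat \<Rightarrow> nat graph" where
  "star n = ({0..n}, {{0,i} | i. 1 \<le> i \<and> i \<le> n})"

definition induced_copy :: "'a graph \<Rightarrow> 'a set \<Rightarrow> 'b graph \<Rightarrow> bool" where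
  "induced_copy F S H \<longleftrightarrow> S \<subseteq> verts F \<and>
     (\<exists>f. bij_betw f S (verts H) \<and>
          (\<forall>u\<in>S. \<forall>v\<in>S. {u, v} \<in> edges F \<longleftrightarrow> {f u, f v} \<in> edges H))"

text \<open>A red/blue edge colouring is a map from edges to bool (True = red, False = blue).
  An induced copy of H in colour col: all edges of F[S] have colour col.\<close>
definition mono_induced_copy :: "'a graph \<Rightarrow> ('a set \<Rightarrow> bool) \<Rightarrow> bool \<Rightarrow> 'b graph \<Rightarrow> bool" where
  "mono_induced_copy F c col H \<longleftrightarrow>
     (\<exists>S. induced_copy F S H \<and> (\<forall>e\<in>edges F. e \<subseteq> S \<longrightarrow> c e = col))"

definition ind_arrows :: "'a graph \<Rightarrow> 'b graph \<Rightarrow> 'c graph \<Rightarrow> bool" where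
  "ind_arrows F H G \<longleftrightarrow>
     (\<forall>c :: 'a set \<Rightarrow> bool. mono_induced_copy F c True H \<or> mono_induced_copy F c False G)"

text \<open>Host graphs are taken on vertex type nat, which is
  no restriction since every finite graph is isomorphic to one on nat.\<close>
definition IR :: "'b graph \<Rightarrow> 'c graph \<Rightarrow> nat" where
  "IR H G = (LEAST N. \<exists>F :: nat graph. simple_graph F \<and> card (verts F) = N \<and> ind_arrows F H G)"

end

(*
  The host graph is bipartite: on one side the grid points (i, j) of [l] \<times> [q],
  on the other side c copies of every map f : [l] \<rightarrow> [q], a point being adjacent to a map iff
  it lies off the graph of the map.  Neighbourhoods of points are independent sets of size
  c (q - 1) q^(l - 1), so without a blue induced K_{1,n} every point has at least c q^(l - 1) red
  maps once n - 1 \<le> c (q - 2) q^(l - 1).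

  2K_2: if a' lies on a red map of a and a on a red map of a', the two red edges form an induced
  2K_2.  So "lies on a red map of" is an oriented graph on the lq points, some point a has fewer
  than lq/2 out-neighbours, every red map of a takes its values among them, and AM-GM bounds the
  number of red maps of a by c (q/2)^l < c q^(l - 1) as soon as q < 2^l.

  P_4: double counting gives a map b with at least l red points.  For a red point a of b, every
  red map of a must avoid all red points of b (otherwise an induced red P_4 appears), so a has at
  most c \<Prod>(q - t_i) \<le> c q^l e^(-l/q) red maps, where t_i counts the red points of b in column i;
  this is below c q^(l - 1) once l \<ge> q^2.

  With q \<approx> 2 (ln n)^(1/4), l = q^2 and c = \<lceil>(n - 1) / ((q - 2) q^(l - 1))\<rceil> the host graph has
  lq + c q^l \<le> n q / (q - 2) + q^3 + q^(q^2) \<le> n + 2 n (ln n)^(-1/4) vertices for large n.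
*)
theory Submission
  imports Defs "HOL-Library.FuncSet" "HOL-Real_Asymp.Real_Asymp"
begin

section \<open>Relabelling graphs\<close>

definition map_graph :: "('a \<Rightarrow> 'b) \<Rightarrow> 'a graph \<Rightarrow> 'b graph" where
  "map_graph \<phi> F = (\<phi> ` verts F, image \<phi> ` edges F)"

lemma simple_graph_edgeE:
  assumes "simple_graph F" "e \<in> edges F"
  obtains u v where "e = {u, v}" "u \<noteq> v" "u \<in> verts F" "v \<in> verts F"
  using assms unfolding simple_graph_def by force

lemma simple_graph_edge_subset:
  assumes "simple_graph F" "e \<in> edges F"
  shows "e \<subseteq> verts F"
  using assms by (elim simple_graph_edgeE) auto

lemma simple_graph_no_loop:
  assumes "simple_graph F"
  shows "{x} \<notin> edges F"
  using assms by (auto elim: simple_graph_edgeE simp: doubleton_eq_iff)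

lemma map_graph_edge_iff:
  assumes inj: "inj_on \<phi> (verts F)" and F: "simple_graph F" and e: "e \<subseteq> verts F"
  shows "\<phi> ` e \<in> edges (map_graph \<phi> F) \<longleftrightarrow> e \<in> edges F"
  unfolding map_graph_def edges_def snd_conv
  by (rule inj_on_image_mem_iff[OF inj_on_image_Pow[OF inj]])
    (use e simple_graph_edge_subset[OF F] in \<open>auto simp: edges_def\<close>)

lemma map_graph_edge_imageE:
  assumes inj: "inj_on \<phi> (verts F)" and F: "simple_graph F" and S: "S \<subseteq> verts F"
    and e': "e' \<in> edges (map_graph \<phi> F)" "e' \<subseteq> \<phi> ` S"
  obtains e where "e \<in> edges F" "e \<subseteq> S" "e' = \<phi> ` e"
proof -
  obtain e where e: "e \<in> edges F" "e' = \<phi> ` e"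
    using e'(1) by (auto simp: map_graph_def edges_def)
  have "e \<subseteq> S"
  proof
    fix x assume "x \<in> e"
    then have "\<phi> x \<in> \<phi> ` S" "x \<in> verts F"
      using e e'(2) simple_graph_edge_subset[OF F e(1)] by auto
    then show "x \<in> S" using inj_on_image_mem_iff[OF inj _ S] by blast
  qed
  with e show ?thesis using that by blast
qed

lemma mono_induced_copy_map_graph:
  assumes inj: "inj_on \<phi> (verts F)" and F: "simple_graph F"
    and copy: "mono_induced_copy F (c \<circ> image \<phi>) col K"
  shows "mono_induced_copy (map_graph \<phi> F) c col K"
proof -
  obtain S f where S: "S \<subseteq> verts F" and f: "bij_betw f S (verts K)"
    and adj: "\<forall>u\<in>S. \<forall>v\<in>S. {u, v} \<in> edges F \<longleftrightarrow> {f u, f v} \<in> edges K"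
    and colour: "\<forall>e\<in>edges F. e \<subseteq> S \<longrightarrow> c (\<phi> ` e) = col"
    using copy unfolding mono_induced_copy_def induced_copy_def by auto
  have injS: "inj_on \<phi> S" using inj S by (rule inj_on_subset)
  define f' where "f' = f \<circ> the_inv_into S \<phi>"
  have f'_\<phi>: "f' (\<phi> u) = f u" if "u \<in> S" for u
    using the_inv_into_f_f[OF injS that] by (simp add: f'_def)
  have "bij_betw f' (\<phi> ` S) (verts K)"
    unfolding f'_def by (rule bij_betw_trans[OF bij_betw_the_inv_into[OF inj_on_imp_bij_betw[OF injS]] f])
  moreover have "\<forall>u'\<in>\<phi> ` S. \<forall>v'\<in>\<phi> ` S. {u', v'} \<in> edges (map_graph \<phi> F) \<longleftrightarrow> {f' u', f' v'} \<in> edges K"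
  proof (intro ballI)
    fix u' v' assume "u' \<in> \<phi> ` S" "v' \<in> \<phi> ` S"
    then obtain u v where uv: "u \<in> S" "v \<in> S" "u' = \<phi> u" "v' = \<phi> v" by blast
    have "{u', v'} = \<phi> ` {u, v}" using uv by simp
    then show "{u', v'} \<in> edges (map_graph \<phi> F) \<longleftrightarrow> {f' u', f' v'} \<in> edges K"
      using map_graph_edge_iff[OF inj F, of "{u, v}"] adj uv S f'_\<phi> by auto
  qed
  moreover have "\<forall>e'\<in>edges (map_graph \<phi> F). e' \<subseteq> \<phi> ` S \<longrightarrow> c e' = col"
    using colour by (auto elim: map_graph_edge_imageE[OF inj F S])
  moreover have "\<phi> ` S \<subseteq> verts (map_graph \<phi> F)" using S by (auto simp: map_graph_def verts_def)
  ultimately show ?thesis unfolding mono_induced_copy_def induced_copy_def by blast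
qed

lemma ind_arrows_map_graph:
  assumes "inj_on \<phi> (verts F)" "simple_graph F" "ind_arrows F H G"
  shows "ind_arrows (map_graph \<phi> F) H G"
  unfolding ind_arrows_def
proof
  fix c :: "'b set \<Rightarrow> bool"
  have "mono_induced_copy F (c \<circ> image \<phi>) True H \<or> mono_induced_copy F (c \<circ> image \<phi>) False G"
    using assms(3) unfolding ind_arrows_def by blast
  then show "mono_induced_copy (map_graph \<phi> F) c True H \<or> mono_induced_copy (map_graph \<phi> F) c False G"
    using mono_induced_copy_map_graph[OF assms(1,2)] by (metis (no_types))
qed

lemma simple_graph_map_graph:
  assumes inj: "inj_on \<phi> (verts F)" and F: "simple_graph F"
  shows "simple_graph (map_graph \<phi> F)"
  using F inj_onD[OF inj] unfolding simple_graph_def map_graph_def verts_def edges_def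
  by fastforce

lemma IR_le_card_verts:
  fixes F :: "'a graph"
  assumes F: "simple_graph F" and arrows: "ind_arrows F H G"
  shows "(\<exists>F' :: nat graph. simple_graph F' \<and> ind_arrows F' H G) \<and> IR H G \<le> card (verts F)"
proof -
  obtain \<phi> :: "'a \<Rightarrow> nat" where \<phi>: "bij_betw \<phi> (verts F) {0..<card (verts F)}"
    using ex_bij_betw_finite_nat F unfolding simple_graph_def by blast
  then have inj: "inj_on \<phi> (verts F)" by (rule bij_betw_imp_inj_on)
  let ?F' = "map_graph \<phi> F"
  have "simple_graph ?F'" "ind_arrows ?F' H G"
    using simple_graph_map_graph[OF inj F] ind_arrows_map_graph[OF inj F arrows] .
  moreover have "card (verts ?F') = card (verts F)"
    using card_image[OF inj] by (simp add: map_graph_def verts_def)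
  ultimately show ?thesis unfolding IR_def by (metis (mono_tags, lifting) Least_le)
qed

section \<open>Monochromatic induced copies\<close>

lemma simple_graph_P4: "simple_graph P4"
  unfolding simple_graph_def P4_def verts_def edges_def by fastforce

lemma simple_graph_twoK2: "simple_graph twoK2"
  unfolding simple_graph_def twoK2_def verts_def edges_def by fastforce

lemma simple_graph_star: "simple_graph (star n)"
  unfolding simple_graph_def star_def verts_def edges_def by fastforce

lemma mono_induced_copy_embeddingI:
  fixes H :: "'b::linorder graph"
  assumes F: "simple_graph F" and H: "simple_graph H"
    and inj: "inj_on g (verts H)" and sub: "g ` verts H \<subseteq> verts F"
    and adj: "\<And>u v. u \<in> verts H \<Longrightarrow> v \<in> verts H \<Longrightarrow> u < v \<Longrightarrow>
      {g u, g v} \<in> edges F \<longleftrightarrow> {u, v} \<in> edges H"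
    and colour: "\<And>u v. u \<in> verts H \<Longrightarrow> v \<in> verts H \<Longrightarrow> u < v \<Longrightarrow> {u, v} \<in> edges H \<Longrightarrow>
      c {g u, g v} = col"
  shows "mono_induced_copy F c col H"
proof -
  have adj_colour: "({g u, g v} \<in> edges F \<longleftrightarrow> {u, v} \<in> edges H) \<and>
      ({u, v} \<in> edges H \<longrightarrow> c {g u, g v} = col)" if "u \<in> verts H" "v \<in> verts H" for u v
  proof (cases u v rule: linorder_cases)
    case less
    then show ?thesis using adj colour that by blast
  next
    case equal
    then show ?thesis using simple_graph_no_loop[OF F] simple_graph_no_loop[OF H] by simp
  next
    case greater
    then have "({g v, g u} \<in> edges F \<longleftrightarrow> {v, u} \<in> edges H) \<and>
        ({v, u} \<in> edges H \<longrightarrow> c {g v, g u} = col)"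
      using adj colour that by blast
    then show ?thesis by (simp add: insert_commute)
  qed
  let ?S = "g ` verts H" and ?f = "the_inv_into (verts H) g"
  have f_g: "?f (g u) = u" if "u \<in> verts H" for u using the_inv_into_f_f[OF inj that] .
  have "bij_betw ?f ?S (verts H)" by (rule bij_betw_the_inv_into[OF inj_on_imp_bij_betw[OF inj]])
  moreover have "\<forall>u'\<in>?S. \<forall>v'\<in>?S. {u', v'} \<in> edges F \<longleftrightarrow> {?f u', ?f v'} \<in> edges H"
    using adj_colour f_g by auto
  moreover have "\<forall>e\<in>edges F. e \<subseteq> ?S \<longrightarrow> c e = col"
  proof (intro ballI impI)
    fix e assume e: "e \<in> edges F" "e \<subseteq> ?S"
    obtain x y where "e = {x, y}" using F e(1) by (rule simple_graph_edgeE)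
    moreover obtain u v where "x = g u" "y = g v" "u \<in> verts H" "v \<in> verts H"
      using e(2) calculation by auto
    ultimately show "c e = col" using adj_colour e(1) by auto
  qed
  ultimately show ?thesis using sub unfolding mono_induced_copy_def induced_copy_def by blast
qed

lemma P4_edge_iff: "{u, v} \<in> edges P4 \<longleftrightarrow> {u, v} = {0, 1} \<or> {u, v} = {1, 2} \<or> {u, v} = {2, 3}"
  by (simp add: P4_def edges_def)

lemma twoK2_edge_iff: "{u, v} \<in> edges twoK2 \<longleftrightarrow> {u, v} = {0, 1} \<or> {u, v} = {2, 3}"
  by (simp add: twoK2_def edges_def)

lemma mono_induced_copy_P4I:
  assumes F: "simple_graph F" and verts: "set [x0, x1, x2, x3] \<subseteq> verts F"
    and distinct: "distinct [x0, x1, x2, x3]"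
    and edges: "{x0, x1} \<in> edges F" "{x1, x2} \<in> edges F" "{x2, x3} \<in> edges F"
    and non_edges: "{x0, x2} \<notin> edges F" "{x0, x3} \<notin> edges F" "{x1, x3} \<notin> edges F"
    and colour: "c {x0, x1} = col" "c {x1, x2} = col" "c {x2, x3} = col"
  shows "mono_induced_copy F c col P4"
proof (rule mono_induced_copy_embeddingI[OF F simple_graph_P4, where g = "nth [x0, x1, x2, x3]"])
  show "inj_on (nth [x0, x1, x2, x3]) (verts P4)"
    using distinct by (auto simp: P4_def verts_def inj_on_def)
  show "nth [x0, x1, x2, x3] ` verts P4 \<subseteq> verts F" using verts by (auto simp: P4_def verts_def)
  fix u v assume "u \<in> verts P4" "v \<in> verts P4" "u < v"
  then show "{[x0, x1, x2, x3] ! u, [x0, x1, x2, x3] ! v} \<in> edges F \<longleftrightarrow> {u, v} \<in> edges P4"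
    and "{u, v} \<in> edges P4 \<Longrightarrow> c {[x0, x1, x2, x3] ! u, [x0, x1, x2, x3] ! v} = col"
    unfolding P4_edge_iff unfolding P4_def verts_def fst_conv
    by (elim insertE emptyE; simp add: numeral_eq_Suc doubleton_eq_iff edges non_edges colour)+
qed

lemma mono_induced_copy_twoK2I:
  assumes F: "simple_graph F" and verts: "set [x0, x1, x2, x3] \<subseteq> verts F"
    and distinct: "distinct [x0, x1, x2, x3]"
    and edges: "{x0, x1} \<in> edges F" "{x2, x3} \<in> edges F"
    and non_edges: "{x0, x2} \<notin> edges F" "{x0, x3} \<notin> edges F"
      "{x1, x2} \<notin> edges F" "{x1, x3} \<notin> edges F"
    and colour: "c {x0, x1} = col" "c {x2, x3} = col"
  shows "mono_induced_copy F c col twoK2"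
proof (rule mono_induced_copy_embeddingI[OF F simple_graph_twoK2, where g = "nth [x0, x1, x2, x3]"])
  show "inj_on (nth [x0, x1, x2, x3]) (verts twoK2)"
    using distinct by (auto simp: twoK2_def verts_def inj_on_def)
  show "nth [x0, x1, x2, x3] ` verts twoK2 \<subseteq> verts F" using verts by (auto simp: twoK2_def verts_def)
  fix u v assume "u \<in> verts twoK2" "v \<in> verts twoK2" "u < v"
  then show "{[x0, x1, x2, x3] ! u, [x0, x1, x2, x3] ! v} \<in> edges F \<longleftrightarrow> {u, v} \<in> edges twoK2"
    and "{u, v} \<in> edges twoK2 \<Longrightarrow> c {[x0, x1, x2, x3] ! u, [x0, x1, x2, x3] ! v} = col"
    unfolding twoK2_edge_iff unfolding twoK2_def verts_def fst_conv
    by (elim insertE emptyE; simp add: numeral_eq_Suc doubleton_eq_iff edges non_edges colour)+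
qed

lemma mono_induced_copy_starI:
  assumes F: "simple_graph F" and a: "a \<in> verts F" and X: "X \<subseteq> verts F" "a \<notin> X"
    and card: "finite X" "card X = n"
    and edges: "\<And>x. x \<in> X \<Longrightarrow> {a, x} \<in> edges F"
    and independent: "\<And>x y. x \<in> X \<Longrightarrow> y \<in> X \<Longrightarrow> {x, y} \<notin> edges F"
    and colour: "\<And>x. x \<in> X \<Longrightarrow> c {a, x} = col"
  shows "mono_induced_copy F c col (star n)"
proof -
  obtain h where h: "bij_betw h {1..n} X" using ex_bij_betw_nat_finite_1 card by blast
  define g where "g i = (if i = 0 then a else h i)" for i
  have verts_star: "verts (star n) = insert 0 {1..n}" by (auto simp: star_def verts_def)
  have g_X: "g i \<in> X" if "i \<in> {1..n}" for i using bij_betwE[OF h] that by (simp add: g_def)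
  show ?thesis
  proof (rule mono_induced_copy_embeddingI[OF F simple_graph_star, where g = g])
    show "inj_on g (verts (star n))"
      using bij_betw_imp_inj_on[OF h] g_X X(2) unfolding verts_star inj_on_def
      by (metis g_def atLeastAtMost_iff insert_iff not_one_le_zero)
    show "g ` verts (star n) \<subseteq> verts F" using a X(1) g_X by (auto simp: verts_star g_def)
    fix u v assume uv: "u \<in> verts (star n)" "v \<in> verts (star n)" "u < v"
    then have v: "v \<in> {1..n}" by (auto simp: verts_star)
    have edge_iff: "{u, v} \<in> edges (star n) \<longleftrightarrow> u = 0"
      using uv v by (auto simp: star_def edges_def doubleton_eq_iff)
    show "{g u, g v} \<in> edges F \<longleftrightarrow> {u, v} \<in> edges (star n)"
      and "{u, v} \<in> edges (star n) \<Longrightarrow> c {g u, g v} = col"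
      using uv edges independent colour g_X[OF v] g_X[of u] unfolding edge_iff
      by (auto simp: verts_star g_def)
  qed
qed

lemma card_mono_independent_neighbours_lt:
  assumes F: "simple_graph F" and no_star: "\<not> mono_induced_copy F c col (star n)"
    and a: "a \<in> verts F" and X: "finite X" "X \<subseteq> verts F" "a \<notin> X"
    and edges: "\<And>x. x \<in> X \<Longrightarrow> {a, x} \<in> edges F"
    and independent: "\<And>x y. x \<in> X \<Longrightarrow> y \<in> X \<Longrightarrow> {x, y} \<notin> edges F"
    and colour: "\<And>x. x \<in> X \<Longrightarrow> c {a, x} = col"
  shows "card X < n"
proof (rule ccontr)
  assume "\<not> card X < n"
  then obtain Y where Y: "Y \<subseteq> X" "card Y = n" "finite Y"
    using obtain_subset_with_card_n[of n X] by (metis not_less)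
  have "mono_induced_copy F c col (star n)"
  proof (rule mono_induced_copy_starI[OF F a])
    show "Y \<subseteq> verts F" "a \<notin> Y" "finite Y" "card Y = n" using X Y by auto
  qed (use Y edges independent colour in blast)+
  with no_star show False ..
qed

section \<open>Counting inequalities\<close>

lemma prod_le_power_exp_sum:
  fixes w :: "'i \<Rightarrow> real"
  assumes I: "finite I" and w: "\<And>i. i \<in> I \<Longrightarrow> 0 \<le> w i" and q: "0 < q"
  shows "(\<Prod>i\<in>I. w i) \<le> q ^ card I * exp ((\<Sum>i\<in>I. w i) / q - card I)"
proof -
  have "w i \<le> q * exp (w i / q - 1)" for i
    using mult_left_mono[OF exp_ge_add_one_self[of "w i / q - 1"], of q] q by simp
  then have "(\<Prod>i\<in>I. w i) \<le> (\<Prod>i\<in>I. q * exp (w i / q - 1))"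
    using w by (intro prod_mono) auto
  also have "\<dots> = q ^ card I * exp (\<Sum>i\<in>I. w i / q - 1)"
    using I by (simp add: prod.distrib exp_sum)
  also have "(\<Sum>i\<in>I. w i / q - 1) = (\<Sum>i\<in>I. w i) / q - card I"
    by (simp add: sum_subtractf sum_divide_distrib)
  finally show ?thesis .
qed

lemma prod_le_power_of_sum_le:
  fixes w :: "'i \<Rightarrow> real" and m :: real
  assumes I: "finite I" and w: "\<And>i. i \<in> I \<Longrightarrow> 0 \<le> w i" and m: "0 < m"
    and sum: "(\<Sum>i\<in>I. w i) \<le> card I * m"
  shows "(\<Prod>i\<in>I. w i) \<le> m ^ card I"
proof -
  have "(\<Prod>i\<in>I. w i) \<le> m ^ card I * exp ((\<Sum>i\<in>I. w i) / m - card I)"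
    by (rule prod_le_power_exp_sum) (use I w m in auto)
  also have "exp ((\<Sum>i\<in>I. w i) / m - card I) \<le> 1" using sum m by (simp add: field_simps)
  then have "m ^ card I * exp ((\<Sum>i\<in>I. w i) / m - card I) \<le> m ^ card I"
    using m by (simp add: mult_left_le)
  finally show ?thesis .
qed

lemma card_relation_eq_sum:
  assumes "finite A" "finite B" "R \<subseteq> A \<times> B"
  shows "card R = (\<Sum>a\<in>A. card (R `` {a}))"
proof -
  have "R = Sigma A (\<lambda>a. R `` {a})" using assms(3) by auto
  moreover have "finite (R `` {a})" for a
  proof (rule finite_subset[OF _ assms(2)])
    show "R `` {a} \<subseteq> B" using assms(3) by blast
  qed
  ultimately show ?thesis using assms(1) by (metis card_SigmaI)
qed

lemma exists_small_out_degree: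
  assumes A: "finite A" "A \<noteq> {}" and P: "P \<subseteq> A \<times> A" "P \<inter> P\<inverse> = {}"
  shows "\<exists>a\<in>A. 2 * card (P `` {a}) < card A"
proof (rule ccontr)
  assume "\<not> ?thesis"
  then have "card A * card A \<le> (\<Sum>a\<in>A. 2 * card (P `` {a}))"
    using sum_bounded_below[of A "card A"] by (simp add: not_less)
  also have "\<dots> = card (P \<union> P\<inverse>)"
    using card_relation_eq_sum[OF A(1) A(1) P(1)] card_Un_disjoint[of P "P\<inverse>"] P A(1)
    by (simp add: mult_2 sum.distrib finite_subset)
  also have "\<dots> \<le> card (A \<times> A - Id_on A)"
    using P A(1) by (intro card_mono) auto
  also have "\<dots> < card A * card A"
  proof -
    have Id: "Id_on A = (\<lambda>x. (x, x)) ` A" by auto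
    have "card (A \<times> A - Id_on A) = card A * card A - card A"
      using A(1) by (subst card_Diff_subset) (auto simp: Id card_image inj_on_def card_cartesian_product)
    moreover have "0 < card A" using A by (simp add: card_gt_0_iff)
    ultimately show ?thesis by (simp add: diff_less)
  qed
  finally show False by simp
qed

lemma exists_large_in_degree:
  assumes A: "finite A" and B: "finite B" "B \<noteq> {}" and R: "R \<subseteq> A \<times> B"
    and k: "\<And>a. a \<in> A \<Longrightarrow> k \<le> card (R `` {a})"
  shows "\<exists>b\<in>B. card A * k \<le> card B * card (R\<inverse> `` {b})"
proof (rule ccontr)
  assume "\<not> ?thesis"
  then have "(\<Sum>b\<in>B. card B * card (R\<inverse> `` {b})) < (\<Sum>b\<in>B. card A * k)"
    using B by (intro sum_strict_mono) auto
  also have "\<dots> = card B * (card A * k)" by simp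
  also have "card A * k \<le> card R"
    using sum_mono[of A "\<lambda>_. k", OF k] card_relation_eq_sum[OF A B(1) R] by simp
  also have "card R = (\<Sum>b\<in>B. card (R\<inverse> `` {b}))"
    using card_relation_eq_sum[OF B(1) A, of "R\<inverse>"] R by auto
  finally show False by (simp add: sum_distrib_left)
qed

section \<open>The host graph\<close>

type_synonym host_vertex = "(nat \<times> nat) + (nat \<times> (nat \<Rightarrow> nat))"

definition host_points :: "nat \<Rightarrow> nat \<Rightarrow> (nat \<times> nat) set" where
  "host_points l q = {..<l} \<times> {..<q}"

definition host_maps :: "nat \<Rightarrow> nat \<Rightarrow> nat \<Rightarrow> (nat \<times> (nat \<Rightarrow> nat)) set" where
  "host_maps l q c = {..<c} \<times> ({..<l} \<rightarrow>\<^sub>E {..<q})"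

text \<open>A map vertex (s, f) is the s-th copy of f; the point a = (i, j) is adjacent to it iff
  f i \<noteq> j, i.e. iff a lies off the graph of f.\<close>
definition host :: "nat \<Rightarrow> nat \<Rightarrow> nat \<Rightarrow> host_vertex graph" where
  "host l q c = (Inl ` host_points l q \<union> Inr ` host_maps l q c,
     {{Inl a, Inr b} | a b. a \<in> host_points l q \<and> b \<in> host_maps l q c \<and> snd b (fst a) \<noteq> snd a})"

lemma finite_host_points: "finite (host_points l q)"
  by (simp add: host_points_def)

lemma finite_host_maps: "finite (host_maps l q c)"
  by (simp add: host_maps_def finite_PiE)

lemma card_host_points: "card (host_points l q) = l * q"
  by (simp add: host_points_def)

lemma card_host_maps: "card (host_maps l q c) = c * q ^ l"
  by (simp add: host_maps_def card_cartesian_product card_PiE)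

lemma verts_host: "verts (host l q c) = Inl ` host_points l q \<union> Inr ` host_maps l q c"
  by (simp add: host_def verts_def)

lemma host_edge_iff:
  "{Inl a, Inr b} \<in> edges (host l q c) \<longleftrightarrow>
     a \<in> host_points l q \<and> b \<in> host_maps l q c \<and> snd b (fst a) \<noteq> snd a"
  unfolding host_def edges_def snd_conv
proof
  show "a \<in> host_points l q \<and> b \<in> host_maps l q c \<and> snd b (fst a) \<noteq> snd a"
    if "{Inl a, Inr b} \<in> {{Inl a, Inr b} |a b. a \<in> host_points l q \<and> b \<in> host_maps l q c \<and>
      snd b (fst a) \<noteq> snd a}"
    using that by (auto simp: doubleton_eq_iff)
qed blast

lemma host_points_independent: "{Inl a, Inl a'} \<notin> edges (host l q c)"
  by (auto simp: host_def edges_def doubleton_eq_iff)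

lemma host_maps_independent: "{Inr b, Inr b'} \<notin> edges (host l q c)"
  by (auto simp: host_def edges_def doubleton_eq_iff)

lemma simple_graph_host: "simple_graph (host l q c)"
  unfolding simple_graph_def
proof (intro conjI ballI)
  show "finite (verts (host l q c))" by (simp add: verts_host finite_host_points finite_host_maps)
  fix e assume "e \<in> edges (host l q c)"
  then obtain a b where "e = {Inl a, Inr b}" "a \<in> host_points l q" "b \<in> host_maps l q c"
    by (auto simp: host_def edges_def)
  then show "\<exists>u v. e = {u, v} \<and> u \<noteq> v \<and> u \<in> verts (host l q c) \<and> v \<in> verts (host l q c)"
    by (intro exI[of _ "Inl a"] exI[of _ "Inr b"]) (simp add: verts_host)
qed

lemma card_verts_host: "card (verts (host l q c)) = l * q + c * q ^ l"
  unfolding verts_host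
  by (subst card_Un_disjoint)
    (auto simp: card_image finite_host_points finite_host_maps card_host_points card_host_maps)

lemma card_host_maps_le_prod:
  assumes R: "R \<subseteq> host_maps l q c" and S: "\<And>i. finite (S i)"
    and in_S: "\<And>b i. b \<in> R \<Longrightarrow> i < l \<Longrightarrow> snd b i \<in> S i"
  shows "card R \<le> c * (\<Prod>i<l. card (S i))"
proof -
  have "R \<subseteq> {..<c} \<times> PiE {..<l} S"
    using R in_S by (fastforce simp: host_maps_def PiE_iff)
  from card_mono[OF _ this] show ?thesis
    using S by (simp add: finite_PiE card_cartesian_product card_PiE)
qed

lemma card_host_maps_off_point:
  assumes a: "a \<in> host_points l q"
  shows "card {b \<in> host_maps l q c. snd b (fst a) \<noteq> snd a} = c * ((q - 1) * q ^ (l - 1))"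
proof -
  obtain i j where ij: "a = (i, j)" "i < l" "j < q" using a by (auto simp: host_points_def)
  define S where "S i' = (if i' = i then {..<q} - {j} else {..<q})" for i'
  have "f \<in> PiE {..<l} S \<longleftrightarrow> f \<in> {..<l} \<rightarrow>\<^sub>E {..<q} \<and> f i \<noteq> j" for f
    using ij by (auto simp: PiE_iff S_def)
  then have "b \<in> {..<c} \<times> PiE {..<l} S \<longleftrightarrow> b \<in> host_maps l q c \<and> snd b (fst a) \<noteq> snd a" for b
    using ij by (cases b) (simp add: host_maps_def)
  then have "{b \<in> host_maps l q c. snd b (fst a) \<noteq> snd a} = {..<c} \<times> PiE {..<l} S"
    by blast
  moreover have "(\<Prod>i'<l. card (S i')) = (q - 1) * q ^ (l - 1)"
    using ij by (simp add: prod.remove[of _ i] S_def)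
  ultimately show ?thesis by (simp add: card_cartesian_product card_PiE)
qed

definition red_maps ::
  "(host_vertex set \<Rightarrow> bool) \<Rightarrow> nat \<Rightarrow> nat \<Rightarrow> nat \<Rightarrow> nat \<times> nat \<Rightarrow> (nat \<times> (nat \<Rightarrow> nat)) set"
  where "red_maps col l q c a = {b \<in> host_maps l q c. snd b (fst a) \<noteq> snd a \<and> col {Inl a, Inr b}}"

definition red_points ::
  "(host_vertex set \<Rightarrow> bool) \<Rightarrow> nat \<Rightarrow> nat \<Rightarrow> nat \<Rightarrow> nat \<times> (nat \<Rightarrow> nat) \<Rightarrow> (nat \<times> nat) set"
  where "red_points col l q c b = {a \<in> host_points l q. b \<in> red_maps col l q c a}"

lemma card_red_maps_ge:
  assumes no_star: "\<not> mono_induced_copy (host l q c) col False (star n)"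
    and a: "a \<in> host_points l q" and q: "2 \<le> q" and n: "n - 1 \<le> c * ((q - 2) * q ^ (l - 1))"
  shows "c * q ^ (l - 1) \<le> card (red_maps col l q c a)"
proof -
  define blue where "blue = {b \<in> host_maps l q c. snd b (fst a) \<noteq> snd a \<and> \<not> col {Inl a, Inr b}}"
  have "card (Inr ` blue :: host_vertex set) < n"
    by (rule card_mono_independent_neighbours_lt[OF simple_graph_host no_star, of "Inl a"])
      (use a finite_host_maps in \<open>auto simp: blue_def verts_host host_edge_iff
        host_maps_independent\<close>)
  then have "card blue < n" by (simp add: card_image)
  moreover have "card (red_maps col l q c a) + card blue = c * ((q - 1) * q ^ (l - 1))"
    unfolding card_host_maps_off_point[OF a, of c, symmetric] using finite_host_maps
    by (subst card_Un_disjoint[symmetric]) (auto simp: red_maps_def blue_def intro: arg_cong[where f = card])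
  moreover obtain q' where "q = q' + 2" using q by (metis add.commute le_Suc_ex)
  ultimately show ?thesis using n by (simp add: algebra_simps)
qed

definition on_red_map ::
  "(host_vertex set \<Rightarrow> bool) \<Rightarrow> nat \<Rightarrow> nat \<Rightarrow> nat \<Rightarrow> ((nat \<times> nat) \<times> (nat \<times> nat)) set"
  where "on_red_map col l q c = {(a, a'). a \<in> host_points l q \<and> a' \<in> host_points l q \<and> a \<noteq> a' \<and>
    (\<exists>b\<in>red_maps col l q c a. snd b (fst a') = snd a')}"

lemma on_red_map_asym:
  assumes no_twoK2: "\<not> mono_induced_copy (host l q c) col True twoK2"
  shows "on_red_map col l q c \<inter> (on_red_map col l q c)\<inverse> = {}"
proof (rule ccontr)
  assume "on_red_map col l q c \<inter> (on_red_map col l q c)\<inverse> \<noteq> {}"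
  then obtain a a' b b' where aa': "a \<in> host_points l q" "a' \<in> host_points l q" "a \<noteq> a'"
    and b: "b \<in> red_maps col l q c a" "snd b (fst a') = snd a'"
    and b': "b' \<in> red_maps col l q c a'" "snd b' (fst a) = snd a"
    unfolding on_red_map_def by blast
  have "mono_induced_copy (host l q c) col True twoK2"
    by (rule mono_induced_copy_twoK2I[OF simple_graph_host, of "Inl a" "Inr b" "Inl a'" "Inr b'"])
      (use aa' b b' in \<open>auto simp: red_maps_def verts_host host_edge_iff
        host_points_independent host_maps_independent insert_commute\<close>)
  with no_twoK2 show False ..
qed

lemma exists_small_red_maps_of_twoK2_free:
  assumes no_twoK2: "\<not> mono_induced_copy (host l q c) col True twoK2" and lq: "0 < l" "0 < q"
  shows "\<exists>a\<in>host_points l q. real (card (red_maps col l q c a)) \<le> c * (q / 2) ^ l"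
proof -
  let ?red = "red_maps col l q c" and ?on = "on_red_map col l q c"
  have on: "?on \<subseteq> host_points l q \<times> host_points l q" by (auto simp: on_red_map_def)
  moreover have "host_points l q \<noteq> {}" using lq by (auto simp: host_points_def)
  ultimately have "\<exists>a\<in>host_points l q. 2 * card (?on `` {a}) < l * q"
    using exists_small_out_degree[OF finite_host_points] on_red_map_asym[OF no_twoK2]
      card_host_points by metis
  then obtain a where a: "a \<in> host_points l q" and small: "2 * card (?on `` {a}) < l * q" ..
  define W where "W i = {j. (a, (i, j)) \<in> ?on}" for i
  have W: "W i \<subseteq> {..<q}" for i by (auto simp: W_def on_red_map_def host_points_def)
  then have finite_W: "finite (W i)" for i by (rule finite_subset) simp
  have "card (?red a) \<le> c * (\<Prod>i<l. card (W i))"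
  proof (rule card_host_maps_le_prod)
    show "?red a \<subseteq> host_maps l q c" by (auto simp: red_maps_def)
    show "finite (W i)" for i by (rule finite_W)
    fix b i assume b: "b \<in> ?red a" and i: "i < l"
    have "snd b \<in> {..<l} \<rightarrow>\<^sub>E {..<q}" "snd b (fst a) \<noteq> snd a"
      using b by (simp_all add: red_maps_def host_maps_def mem_Times_iff)
    then have "(i, snd b i) \<in> host_points l q" "(i, snd b i) \<noteq> a"
      using i PiE_mem by (fastforce simp: host_points_def)+
    then show "snd b i \<in> W i" using a b by (simp add: W_def on_red_map_def) blast
  qed
  then have "real (card (?red a)) \<le> c * (\<Prod>i<l. real (card (W i)))"
    by (metis of_nat_mono of_nat_mult of_nat_prod)
  moreover have "(\<Sum>i<l. card (W i)) = card (?on `` {a})"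
  proof -
    have "?on `` {a} = Sigma {..<l} W" using on by (auto simp: W_def host_points_def)
    then show ?thesis using finite_W by simp
  qed
  then have "(\<Prod>i<l. real (card (W i))) \<le> (q / 2) ^ l"
    using prod_le_power_of_sum_le[of "{..<l}" "\<lambda>i. real (card (W i))" "real q / 2"] lq
      of_nat_mono[OF less_imp_le[OF small], where 'a = real]
    by (simp flip: of_nat_sum)
  ultimately show ?thesis using a by (meson mult_left_mono of_nat_0_le_iff order_trans)
qed

lemma host_ind_arrows_twoK2:
  assumes q: "2 \<le> q" and l: "q < 2 ^ l" and c: "1 \<le> c" and n: "n - 1 \<le> c * ((q - 2) * q ^ (l - 1))"
  shows "ind_arrows (host l q c) twoK2 (star n)"
  unfolding ind_arrows_def
proof (intro allI disjCI)
  fix col assume no_star: "\<not> mono_induced_copy (host l q c) col False (star n)"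
  show "mono_induced_copy (host l q c) col True twoK2"
  proof (rule ccontr)
    assume "\<not> mono_induced_copy (host l q c) col True twoK2"
    moreover have "0 < l" using q l by (cases l) auto
    ultimately obtain a where a: "a \<in> host_points l q"
      and small: "real (card (red_maps col l q c a)) \<le> c * (q / 2) ^ l"
      using exists_small_red_maps_of_twoK2_free q by fastforce
    have "real (c * q ^ (l - 1)) \<le> c * (q / 2) ^ l"
      using order_trans[OF of_nat_mono[OF card_red_maps_ge[OF no_star a q n]] small] .
    then have "real q ^ (l - 1) * 2 ^ l \<le> real q ^ l" using c by (simp add: power_divide field_simps)
    also have "real q ^ l = real q ^ (l - 1) * q" using \<open>0 < l\<close> by (metis power_minus_mult)
    finally have "2 ^ l \<le> real q" using q by simp
    with l show False by (metis of_nat_le_iff of_nat_numeral of_nat_power not_le)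
  qed
qed

lemma card_red_maps_le_of_P4_free:
  assumes no_P4: "\<not> mono_induced_copy (host l q c) col True P4"
    and a: "a \<in> red_points col l q c b"
  shows "card (red_maps col l q c a) \<le> c * (\<Prod>i<l. q - card {j. (i, j) \<in> red_points col l q c b})"
proof -
  let ?red = "red_maps col l q c" and ?T = "\<lambda>i. {j. (i, j) \<in> red_points col l q c b}"
  have T: "?T i \<subseteq> {..<q}" for i by (auto simp: red_points_def host_points_def)
  have ab: "a \<in> host_points l q" "b \<in> ?red a" using a by (simp_all add: red_points_def)
  have "card (?red a) \<le> c * (\<Prod>i<l. card ({..<q} - ?T i))"
  proof (rule card_host_maps_le_prod)
    show "?red a \<subseteq> host_maps l q c" by (auto simp: red_maps_def)
    show "finite ({..<q} - ?T i)" for i by simp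
    fix b' i assume b': "b' \<in> ?red a" and i: "i < l"
    have b'_red: "b' \<in> host_maps l q c" "snd b' (fst a) \<noteq> snd a" "col {Inl a, Inr b'}"
      using b' by (simp_all add: red_maps_def)
    then have "snd b' i < q" using i PiE_mem by (fastforce simp: host_maps_def mem_Times_iff)
    moreover have "(i, snd b' i) \<notin> red_points col l q c b"
    proof
      assume "(i, snd b' i) \<in> red_points col l q c b"
      then have a': "(i, snd b' i) \<in> host_points l q" "b \<in> ?red (i, snd b' i)"
        by (simp_all add: red_points_def)
      then have "b \<noteq> b'" "(i, snd b' i) \<noteq> a" using b'_red(2) by (auto simp: red_maps_def)
      then have "mono_induced_copy (host l q c) col True P4"
        using ab a' b'_red
        by (intro mono_induced_copy_P4I[OF simple_graph_host, of "Inl (i, snd b' i)" "Inr b" "Inl a" "Inr b'"])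
          (auto simp: red_maps_def verts_host host_edge_iff host_points_independent
            host_maps_independent insert_commute[of "Inr b"])
      with no_P4 show False ..
    qed
    ultimately show "snd b' i \<in> {..<q} - ?T i" by simp
  qed
  also have "(\<Prod>i<l. card ({..<q} - ?T i)) = (\<Prod>i<l. q - card (?T i))"
  proof (rule prod.cong[OF refl])
    show "card ({..<q} - ?T i) = q - card (?T i)" for i
      using card_Diff_subset[OF finite_subset[OF T finite_lessThan] T] by simp
  qed
  finally show ?thesis .
qed

lemma card_red_maps_le_exp_of_P4_free:
  assumes no_P4: "\<not> mono_induced_copy (host l q c) col True P4"
    and a: "a \<in> red_points col l q c b" and q: "0 < q"
  shows "real (card (red_maps col l q c a)) \<le> c * q ^ l * exp (- card (red_points col l q c b) / q)"
proof -
  define t where "t i = card {j. (i, j) \<in> red_points col l q c b}" for i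
  have T: "{j. (i, j) \<in> red_points col l q c b} \<subseteq> {..<q}" for i
    by (auto simp: red_points_def host_points_def)
  have t_le: "t i \<le> q" for i unfolding t_def using card_mono[OF finite_lessThan T] by simp
  have "card (red_points col l q c b) =
      card (Sigma {..<l} (\<lambda>i. {j. (i, j) \<in> red_points col l q c b}))"
    by (rule arg_cong[where f = card]) (auto simp: red_points_def host_points_def)
  also have "\<dots> = (\<Sum>i<l. t i)" using finite_subset[OF T finite_lessThan] by (simp add: t_def)
  finally have card_eq: "real (card (red_points col l q c b)) = (\<Sum>i<l. real (t i))" by simp
  have "real (card (red_maps col l q c a)) \<le> c * (\<Prod>i<l. real q - t i)"
    using of_nat_mono[OF card_red_maps_le_of_P4_free[OF no_P4 a], where 'a = real] t_le
    by (simp add: of_nat_diff t_def)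
  also have "\<dots> \<le> c * (q ^ l * exp (- (\<Sum>i<l. real (t i)) / q))"
    using prod_le_power_exp_sum[of "{..<l}" "\<lambda>i. real q - t i" q] t_le q
    by (intro mult_left_mono) (simp_all add: sum_subtractf field_simps)
  finally show ?thesis by (simp add: card_eq mult.assoc)
qed

lemma exists_map_with_many_red_points:
  assumes no_star: "\<not> mono_induced_copy (host l q c) col False (star n)"
    and q: "2 \<le> q" and l: "0 < l" and c: "1 \<le> c" and n: "n - 1 \<le> c * ((q - 2) * q ^ (l - 1))"
  shows "\<exists>b\<in>host_maps l q c. l \<le> card (red_points col l q c b)"
proof -
  define R where "R = {(a, b). a \<in> host_points l q \<and> b \<in> red_maps col l q c a}"
  have R: "R \<subseteq> host_points l q \<times> host_maps l q c" by (auto simp: R_def red_maps_def)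
  have "R `` {a} = red_maps col l q c a" if "a \<in> host_points l q" for a
    using that by (auto simp: R_def)
  then have "c * q ^ (l - 1) \<le> card (R `` {a})" if "a \<in> host_points l q" for a
    using card_red_maps_ge[OF no_star that q n] that by simp
  moreover have "host_maps l q c \<noteq> {}"
    using card_host_maps[of l q c] q c by (cases "host_maps l q c = {}") auto
  ultimately obtain b where b: "b \<in> host_maps l q c"
    and "l * q * (c * q ^ (l - 1)) \<le> c * q ^ l * card (R\<inverse> `` {b})"
    using exists_large_in_degree[OF finite_host_points finite_host_maps _ R]
    by (metis card_host_points card_host_maps)
  moreover have "l * q * (c * q ^ (l - 1)) = c * q ^ l * l"
    using l by (metis power_minus_mult mult.commute mult.left_commute)
  moreover have "R\<inverse> `` {b} = red_points col l q c b" by (auto simp: R_def red_points_def)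
  moreover have "0 < c * q ^ l" using q c by simp
  ultimately show ?thesis by auto
qed

lemma host_ind_arrows_P4:
  assumes q: "2 \<le> q" and l: "q\<^sup>2 \<le> l" and c: "1 \<le> c" and n: "n - 1 \<le> c * ((q - 2) * q ^ (l - 1))"
  shows "ind_arrows (host l q c) P4 (star n)"
  unfolding ind_arrows_def
proof (intro allI disjCI)
  fix col assume no_star: "\<not> mono_induced_copy (host l q c) col False (star n)"
  show "mono_induced_copy (host l q c) col True P4"
  proof (rule ccontr)
    assume no_P4: "\<not> mono_induced_copy (host l q c) col True P4"
    have "0 < q\<^sup>2" using q by simp
    with l have l_pos: "0 < l" by linarith
    obtain b where many: "l \<le> card (red_points col l q c b)"
      using exists_map_with_many_red_points[OF no_star q l_pos c n] by blast
    with l_pos have "red_points col l q c b \<noteq> {}" by auto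
    then obtain a where a: "a \<in> red_points col l q c b" by blast
    then have "a \<in> host_points l q" by (simp add: red_points_def)
    from of_nat_mono[OF card_red_maps_ge[OF no_star this q n], where 'a = real]
    have "real c * q ^ (l - 1) \<le> c * q ^ l * exp (- card (red_points col l q c b) / q)"
      using card_red_maps_le_exp_of_P4_free[OF no_P4 a] q by simp
    also have "\<dots> \<le> c * q ^ l * exp (- q)"
    proof -
      have "real q * q \<le> card (red_points col l q c b)"
        using l many by (metis of_nat_le_iff of_nat_mult power2_eq_square order_trans)
      then have "real q \<le> card (red_points col l q c b) / q" using q by (simp add: field_simps)
      then show ?thesis by (intro mult_left_mono) auto
    qed
    also have "\<dots> = c * q ^ (l - 1) * (q * exp (- q))"
      using power_minus_mult[OF l_pos, of "real q"] by (simp add: mult_ac)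
    finally have "1 \<le> q * exp (- q)" using c q by simp
    with exp_gt_self[of q] show False by (simp add: exp_minus field_simps)
  qed
qed

section \<open>Choice of parameters\<close>

lemma IR_star_le:
  assumes q: "3 \<le> q" and H: "H \<in> {P4, twoK2}"
  shows "(\<exists>F :: nat graph. simple_graph F \<and> ind_arrows F H (star n)) \<and>
    real (IR H (star n)) \<le> real n * q / (real q - 2) + real q ^ 3 + real q ^ q\<^sup>2"
proof -
  define l where "l = q\<^sup>2"
  define M where "M = (q - 2) * q ^ (l - 1)"
  define c where "c = (n - 1) div M + 1"
  have M: "0 < M" using q by (simp add: M_def)
  have "n - 1 < c * M"
    using dividend_less_div_times[OF M, of "n - 1"] by (simp add: c_def algebra_simps)
  then have n: "n - 1 \<le> c * ((q - 2) * q ^ (l - 1))" by (simp add: M_def)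
  have "q < 2 ^ q" by (rule less_exp)
  also have "\<dots> \<le> 2 ^ l" using q by (simp add: l_def power_increasing power2_eq_square)
  finally have arrows: "ind_arrows (host l q c) H (star n)"
    using H host_ind_arrows_P4[of q l c n] host_ind_arrows_twoK2[of q l c n] q n
    by (auto simp: c_def l_def)
  have "real q ^ l = real q ^ (l - 1) * q" using q by (intro power_minus_mult[symmetric]) (simp add: l_def)
  then have q_M: "real q ^ l / M = real q / (real q - 2)"
    using q M by (simp add: M_def of_nat_diff field_simps)
  have "real (c * q ^ l) = (real ((n - 1) div M) + 1) * q ^ l" by (simp add: c_def algebra_simps)
  also have "\<dots> \<le> (real (n - 1) / M + 1) * q ^ l"
    by (intro mult_right_mono add_right_mono of_nat_div_le_of_nat) simp
  also have "\<dots> = real (n - 1) * (q ^ l / M) + q ^ l" by (simp add: field_simps)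
  finally have "real (c * q ^ l) \<le> real (n - 1) * q / (real q - 2) + q ^ l" by (simp add: q_M)
  moreover have "real (n - 1) * q / (real q - 2) \<le> real n * q / (real q - 2)"
    using q by (intro divide_right_mono mult_right_mono) auto
  ultimately have "real (card (verts (host l q c))) \<le> real n * q / (real q - 2) + real q ^ 3 + real q ^ q\<^sup>2"
    by (simp add: card_verts_host l_def power2_eq_square power3_eq_cube)
  then show ?thesis
    using IR_le_card_verts[OF simple_graph_host arrows] of_nat_mono order_trans by blast
qed

lemma host_size_bound:
  fixes x N :: real
  assumes x: "1 \<le> x" and q: "2 * x \<le> real q - 2" "real q \<le> 2 * x + 3" and N: "0 \<le> N"
    and growth: "(2 * x + 3) ^ 3 + exp ((2 * x + 3)\<^sup>2 * ln (2 * x + 3)) \<le> N / x"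
  shows "N * q / (real q - 2) + real q ^ 3 + real q ^ q\<^sup>2 \<le> N + 2 * N / x"
proof -
  have "real q / (real q - 2) = 1 + 2 / (real q - 2)" using q x by (simp add: field_simps)
  also have "2 / (real q - 2) \<le> 1 / x" using q x by (simp add: field_simps)
  finally have "N * q / (real q - 2) \<le> N + N / x"
    using N mult_left_mono by (fastforce simp: field_simps)
  moreover have "real q ^ 3 \<le> (2 * x + 3) ^ 3" using q x by (intro power_mono) auto
  moreover have "real q ^ q\<^sup>2 \<le> exp ((2 * x + 3)\<^sup>2 * ln (2 * x + 3))"
  proof -
    have "real q ^ q\<^sup>2 = exp (ln q) ^ q\<^sup>2" using q x by simp
    also have "\<dots> = exp (real (q\<^sup>2) * ln q)" by (rule exp_of_nat_mult[symmetric])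
    also have "\<dots> \<le> exp ((2 * x + 3)\<^sup>2 * ln (2 * x + 3))"
      using q x by (intro exp_mono mult_mono power_mono) auto
    finally show ?thesis .
  qed
  ultimately show ?thesis using growth by simp
qed

lemma IR_star_le_of_growth:
  fixes n :: nat and x :: real
  assumes n: "2 \<le> n" and x: "x = ln (real n) powr (1/4)" "1 \<le> x"
    and growth: "(2 * x + 3) ^ 3 + exp ((2 * x + 3)\<^sup>2 * ln (2 * x + 3)) \<le> exp (x ^ 4) / x"
    and H: "H \<in> {P4, twoK2}"
  shows "(\<exists>F :: nat graph. simple_graph F \<and> ind_arrows F H (star n)) \<and>
    real (IR H (star n)) \<le> real n + 2 * real n * ln (real n) powr (-1/4)"
proof -
  define q where "q = nat \<lceil>2 * x\<rceil> + 2"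
  have q: "2 * x \<le> real q - 2" "real q \<le> 2 * x + 3" "3 \<le> q"
    using x(2) unfolding q_def by linarith+
  have ln_n: "0 < ln (real n)" using n by simp
  then have "x ^ 4 = ln (real n)" using x(1) by (simp add: powr_realpow[symmetric] powr_powr)
  then have "exp (x ^ 4) = real n" using n by simp
  moreover have "ln (real n) powr (-1/4) = 1 / x" using x(1) ln_n by (simp add: powr_minus_divide)
  ultimately show ?thesis
    using IR_star_le[OF q(3) H, of n] host_size_bound[OF x(2) q(1,2), of "real n"] growth x(2)
    by auto
qed

theorem lemma5:
  shows "\<exists>n0::nat. \<forall>n::nat. n > n0 \<longrightarrow>
           (\<forall>H \<in> {P4, twoK2}.
              (\<exists>F :: nat graph. simple_graph F \<and> ind_arrows F H (star n)) \<and>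
              real (IR H (star n)) \<le> real n + 2 * real n * (ln (real n)) powr (-1/4))"
proof -
  define x where "x n = ln (real n) powr (1/4)" for n :: nat
  define growth where "growth y \<longleftrightarrow>
    1 \<le> y \<and> (2 * y + 3) ^ 3 + exp ((2 * y + 3)\<^sup>2 * ln (2 * y + 3)) \<le> exp (y ^ 4) / y" for y :: real
  have "\<forall>\<^sub>F y in at_top. growth y"
    unfolding growth_def by (intro eventually_conj eventually_ge_at_top) real_asymp
  moreover have "filterlim x at_top sequentially" unfolding x_def by real_asymp
  ultimately have "\<forall>\<^sub>F n in sequentially. growth (x n)" by (rule eventually_compose_filterlim)
  from eventually_conj[OF eventually_ge_at_top[of 2] this]
  obtain n0 where "\<And>n. n0 \<le> n \<Longrightarrow> 2 \<le> n \<and> growth (x n)"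
    unfolding eventually_sequentially by blast
  then show ?thesis
    using IR_star_le_of_growth[OF _ x_def] unfolding growth_def by (metis less_imp_le)
qed

end
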